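(* Let $(S,\sqcup,\cap)$ be an ado-semilattice and define $a\curlyvee b=(a\sqcup b)\cap(b\sqcup a)$. Then for all $a,b,c,d\in S$: (1) $a\sqcup b=a\curlyvee(a\curlyvee b)$; (2) $\curlyvee$ is commutative and idempotent; (3) $(a\curlyvee b)\sqcup(a\sqcup b)=a\sqcup b$; (4) $a\sqcup(b\curlyvee c)=(a\sqcup b)\curlyvee(a\sqcup c)$; (5) if $d\lesssim a$, $d\lesssim b$, $d\lesssim c$, $d\lesssim a\curlyvee b$ and $d\lesssim b\curlyvee c$, then $d\lesssim a\curlyvee c$.
   Context: An o-semilattice is an algebra $(L,\cap,\sqcup)$ such that $(L,\cap)$ is a semilattice and, with $x\leq y$ iff $x=x\cap y$, for all $x,y,z$: (i) $x\leq x\sqcup y$; (ii) $(x\cap y)\sqcup(y\cap z)\leq y$; (iii) $x\sqcup y\leq x\sqcup(y\cap(x\sqcup y))$; (iv) $x\cap z\leq(x\cap y)\sqcup z$. It is distributive if $(a\cap d)\sqcup((b\cap d)\cap(c\cap d))=((a\cap d)\sqcup(b\cap d))\cap((a\cap d)\sqcup(c\cap d))$ for all $a,b,c,d$. An ado-semilattice is a distributive o-semilattice in which $\sqcup$ is associative. Here $x\lesssim y$ means $y\sqcup x=y$. *)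

theory Defs
  imports Main
begin

definition is_semilattice :: "('a \<Rightarrow> 'a \<Rightarrow> 'a) \<Rightarrow> bool" where
  "is_semilattice m \<longleftrightarrow>
     (\<forall>x y z. m (m x y) z = m x (m y z)) \<and>
     (\<forall>x y. m x y = m y x) \<and>
     (\<forall>x. m x x = x)"

definition sl_le :: "('a \<Rightarrow> 'a \<Rightarrow> 'a) \<Rightarrow> 'a \<Rightarrow> 'a \<Rightarrow> bool" where
  "sl_le m x y \<longleftrightarrow> x = m x y"

definition o_semilattice :: "('a \<Rightarrow> 'a \<Rightarrow> 'a) \<Rightarrow> ('a \<Rightarrow> 'a \<Rightarrow> 'a) \<Rightarrow> bool" where
  "o_semilattice m j \<longleftrightarrow>
     is_semilattice m \<and>
     (\<forall>x y. sl_le m x (j x y)) \<and>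
     (\<forall>x y z. sl_le m (j (m x y) (m y z)) y) \<and>
     (\<forall>x y. sl_le m (j x y) (j x (m y (j x y)))) \<and>
     (\<forall>x y z. sl_le m (m x z) (j (m x y) z))"

definition distributive_o :: "('a \<Rightarrow> 'a \<Rightarrow> 'a) \<Rightarrow> ('a \<Rightarrow> 'a \<Rightarrow> 'a) \<Rightarrow> bool" where
  "distributive_o m j \<longleftrightarrow>
     (\<forall>a b c d. j (m a d) (m (m b d) (m c d)) =
                m (j (m a d) (m b d)) (j (m a d) (m c d)))"

definition ado_semilattice :: "('a \<Rightarrow> 'a \<Rightarrow> 'a) \<Rightarrow> ('a \<Rightarrow> 'a \<Rightarrow> 'a) \<Rightarrow> bool" where
  "ado_semilattice m j \<longleftrightarrow>
     o_semilattice m j \<and> distributive_o m j \<and> (\<forall>x y z. j (j x y) z = j x (j y z))"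

definition lsim :: "('a \<Rightarrow> 'a \<Rightarrow> 'a) \<Rightarrow> 'a \<Rightarrow> 'a \<Rightarrow> bool" where
  "lsim j x y \<longleftrightarrow> j y x = y"

definition curlyvee :: "('a \<Rightarrow> 'a \<Rightarrow> 'a) \<Rightarrow> ('a \<Rightarrow> 'a \<Rightarrow> 'a) \<Rightarrow> 'a \<Rightarrow> 'a \<Rightarrow> 'a" where
  "curlyvee m j a b = m (j a b) (j b a)"

end

(*
  In an ado-semilattice the join distributes over meets from the left (the distributivity axiom
  only does so below a common element d, but taking d = (x \<squnion> y) \<inter> (x \<squnion> z) suffices), and it is
  commutative on any two elements with a common upper bound. Hence a \<squnion> (a \<curlyvee> b) = a \<squnion> b =
  (a \<curlyvee> b) \<squnion> a, which is (1); (3) and (4) follow from distributivity and associativity. For (5)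
  the key fact is that {x. d \<lesssim> x} is closed under meets of bounded pairs: applied to a, b and
  a \<curlyvee> b it gives d \<lesssim> a \<inter> b, likewise d \<lesssim> b \<inter> c, and a \<inter> b \<inter> c lies below a \<curlyvee> c.
*)
theory Submission
  imports Defs
begin

text \<open>The order x \<le> y iff x = x \<inter> y of the paper is the order of \<^locale>\<open>semilattice_order\<close>;
  the four assumptions are the axioms (i)--(iv) of an o-semilattice.\<close>

locale osemilattice = semilattice_order meet less_eq less
  for meet :: "'a \<Rightarrow> 'a \<Rightarrow> 'a" (infixl \<open>\<^bold>\<sqinter>\<close> 70)
    and less_eq :: "'a \<Rightarrow> 'a \<Rightarrow> bool" (infix \<open>\<preceq>\<close> 50)
    and less :: "'a \<Rightarrow> 'a \<Rightarrow> bool" (infix \<open>\<prec>\<close> 50) +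
  fixes join :: "'a \<Rightarrow> 'a \<Rightarrow> 'a" (infixl \<open>\<^bold>\<squnion>\<close> 65)
  assumes join_upper1: "x \<preceq> x \<^bold>\<squnion> y"
    and join_meet_below: "(x \<^bold>\<sqinter> y) \<^bold>\<squnion> (y \<^bold>\<sqinter> z) \<preceq> y"
    and join_le_join_meet: "x \<^bold>\<squnion> y \<preceq> x \<^bold>\<squnion> (y \<^bold>\<sqinter> (x \<^bold>\<squnion> y))"
    and meet_le_join_meet: "x \<^bold>\<sqinter> z \<preceq> (x \<^bold>\<sqinter> y) \<^bold>\<squnion> z"
begin

abbreviation lsim_join :: "'a \<Rightarrow> 'a \<Rightarrow> bool" (infix \<open>\<lesssim>\<close> 50)
  where "x \<lesssim> y \<equiv> lsim (\<^bold>\<squnion>) x y"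

abbreviation curlyvee_op :: "'a \<Rightarrow> 'a \<Rightarrow> 'a" (infixl \<open>\<curlyvee>\<close> 65)
  where "x \<curlyvee> y \<equiv> curlyvee (\<^bold>\<sqinter>) (\<^bold>\<squnion>) x y"

lemma meet_join_absorb [simp]: "x \<^bold>\<sqinter> (x \<^bold>\<squnion> y) = x"
  using join_upper1 by (rule absorb1)

lemma join_absorb1:
  assumes "y \<preceq> x"
  shows "x \<^bold>\<squnion> y = x"
proof (rule antisym)
  show "x \<^bold>\<squnion> y \<preceq> x"
    using join_meet_below [of x x y] assms by (simp add: absorb2)
qed (rule join_upper1)

lemma join_absorb2:
  assumes "x \<preceq> y"
  shows "x \<^bold>\<squnion> y = y"
proof (rule antisym)
  show "x \<^bold>\<squnion> y \<preceq> y"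
    using join_meet_below [of x y y] assms by (simp add: absorb1)
  show "y \<preceq> x \<^bold>\<squnion> y"
    using meet_le_join_meet [of y y x] assms by (simp add: absorb2)
qed

lemma join_idem [simp]: "x \<^bold>\<squnion> x = x"
  by (rule join_absorb1) (rule refl)

lemma join_upper2_bounded:
  assumes "x \<preceq> w" and "y \<preceq> w"
  shows "y \<preceq> x \<^bold>\<squnion> y"
  using meet_le_join_meet [of w y x] assms by (simp add: absorb2)

lemma join_commute_bounded:
  assumes "x \<preceq> w" and "y \<preceq> w"
  shows "x \<^bold>\<squnion> y = y \<^bold>\<squnion> x"
proof -
  have "y \<^bold>\<squnion> x \<preceq> x \<^bold>\<squnion> y" if "x \<preceq> w" and "y \<preceq> w" for x y
    using join_meet_below [of y "x \<^bold>\<squnion> y" x] join_upper2_bounded [OF that]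
    by (simp add: absorb1 absorb2 join_upper1)
  with assms show ?thesis
    by (blast intro: antisym)
qed

lemma join_meet_join [simp]: "x \<^bold>\<squnion> (y \<^bold>\<sqinter> (x \<^bold>\<squnion> y)) = x \<^bold>\<squnion> y"
proof (rule antisym)
  show "x \<^bold>\<squnion> (y \<^bold>\<sqinter> (x \<^bold>\<squnion> y)) \<preceq> x \<^bold>\<squnion> y"
    using join_meet_below [of x "x \<^bold>\<squnion> y" y] by (simp add: commute)
qed (rule join_le_join_meet)

lemma join_mono_right:
  assumes "y \<preceq> z"
  shows "x \<^bold>\<squnion> y \<preceq> x \<^bold>\<squnion> z"
proof -
  let ?s = "y \<^bold>\<sqinter> (x \<^bold>\<squnion> y)"
  have "?s \<preceq> (x \<^bold>\<squnion> y) \<^bold>\<sqinter> z"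
    using assms by (simp add: coboundedI1)
  moreover have "(x \<^bold>\<squnion> y) \<^bold>\<sqinter> z \<preceq> x \<^bold>\<squnion> z"
    using meet_le_join_meet [of "x \<^bold>\<squnion> y" z x] by (simp add: commute)
  ultimately have "(x \<^bold>\<squnion> z) \<^bold>\<sqinter> ?s = ?s"
    by (blast intro: absorb2 trans)
  then show ?thesis
    using join_meet_below [of x "x \<^bold>\<squnion> z" ?s] by simp
qed

lemma curlyvee_commute: "a \<curlyvee> b = b \<curlyvee> a"
  by (simp add: curlyvee_def commute)

lemma curlyvee_idem: "a \<curlyvee> a = a"
  by (simp add: curlyvee_def)

lemma curlyvee_le_join: "a \<curlyvee> b \<preceq> a \<^bold>\<squnion> b"
  by (simp add: curlyvee_def)

end

locale distrib_osemilattice = osemilattice +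
  assumes join_meet_distrib_below:
    "(a \<^bold>\<sqinter> d) \<^bold>\<squnion> ((b \<^bold>\<sqinter> d) \<^bold>\<sqinter> (c \<^bold>\<sqinter> d))
       = ((a \<^bold>\<sqinter> d) \<^bold>\<squnion> (b \<^bold>\<sqinter> d)) \<^bold>\<sqinter> ((a \<^bold>\<sqinter> d) \<^bold>\<squnion> (c \<^bold>\<sqinter> d))"
begin

lemma join_meet_eq_bounded:
  assumes "x \<preceq> v" and "v \<preceq> x \<^bold>\<squnion> y"
  shows "x \<^bold>\<squnion> (y \<^bold>\<sqinter> v) = v"
proof -
  let ?d = "x \<^bold>\<squnion> y"
  have "x \<^bold>\<squnion> (y \<^bold>\<sqinter> v) = x \<^bold>\<squnion> ((y \<^bold>\<sqinter> ?d) \<^bold>\<sqinter> v)"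
    using assms(2) by (simp add: assoc absorb2)
  also have "\<dots> = (x \<^bold>\<squnion> (y \<^bold>\<sqinter> ?d)) \<^bold>\<sqinter> (x \<^bold>\<squnion> v)"
    using join_meet_distrib_below [of x ?d y v] assms(2) by (simp add: absorb1)
  also have "\<dots> = v"
    using assms by (simp add: join_absorb2 absorb2)
  finally show ?thesis .
qed

lemma join_meet_distrib_left: "x \<^bold>\<squnion> (y \<^bold>\<sqinter> z) = (x \<^bold>\<squnion> y) \<^bold>\<sqinter> (x \<^bold>\<squnion> z)"
proof (rule antisym)
  show "x \<^bold>\<squnion> (y \<^bold>\<sqinter> z) \<preceq> (x \<^bold>\<squnion> y) \<^bold>\<sqinter> (x \<^bold>\<squnion> z)"
    by (simp add: join_mono_right)
  let ?u = "(x \<^bold>\<squnion> y) \<^bold>\<sqinter> (x \<^bold>\<squnion> z)"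
  have "x \<preceq> ?u"
    by (simp add: join_upper1)
  moreover have "x \<^bold>\<squnion> (y \<^bold>\<sqinter> ?u) = ?u" and "x \<^bold>\<squnion> (z \<^bold>\<sqinter> ?u) = ?u"
    using \<open>x \<preceq> ?u\<close> by (simp_all add: join_meet_eq_bounded)
  ultimately have "x \<^bold>\<squnion> ((y \<^bold>\<sqinter> z) \<^bold>\<sqinter> ?u) = ?u"
    using join_meet_distrib_below [of x ?u y z] by (simp add: absorb1 ac_simps)
  then show "?u \<preceq> x \<^bold>\<squnion> (y \<^bold>\<sqinter> z)"
    using join_mono_right [OF cobounded1 [of "y \<^bold>\<sqinter> z" ?u], of x] by simp
qed

end

locale ado_osemilattice = distrib_osemilattice +
  assumes join_assoc: "(x \<^bold>\<squnion> y) \<^bold>\<squnion> z = x \<^bold>\<squnion> (y \<^bold>\<squnion> z)"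
begin

lemma join_join_absorb: "x \<^bold>\<squnion> (y \<^bold>\<squnion> x) = x \<^bold>\<squnion> y"
  by (simp add: join_absorb1 join_upper1 flip: join_assoc)

lemma join_left_self_distrib: "(a \<^bold>\<squnion> x) \<^bold>\<squnion> (a \<^bold>\<squnion> y) = a \<^bold>\<squnion> (x \<^bold>\<squnion> y)"
  by (simp add: join_absorb1 join_upper1 flip: join_assoc)

lemma join_curlyvee_left: "a \<^bold>\<squnion> (a \<curlyvee> b) = a \<^bold>\<squnion> b"
  by (simp add: curlyvee_def join_meet_distrib_left join_absorb2 join_upper1 join_join_absorb)

lemma join_curlyvee_right: "(a \<curlyvee> b) \<^bold>\<squnion> a = a \<^bold>\<squnion> b"
  using join_commute_bounded [OF curlyvee_le_join join_upper1] join_curlyvee_left by simp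

lemma curlyvee_curlyvee_left: "a \<curlyvee> (a \<curlyvee> b) = a \<^bold>\<squnion> b"
  by (simp add: curlyvee_def [of _ _ a "a \<curlyvee> b"] join_curlyvee_left join_curlyvee_right)

lemma join_curlyvee_distrib: "a \<^bold>\<squnion> (b \<curlyvee> c) = (a \<^bold>\<squnion> b) \<curlyvee> (a \<^bold>\<squnion> c)"
  by (simp add: curlyvee_def join_meet_distrib_left join_left_self_distrib)

lemma lsim_le_trans:
  assumes "d \<lesssim> x" and "x \<preceq> y"
  shows "d \<lesssim> y"
proof -
  have "y \<^bold>\<squnion> d = (y \<^bold>\<squnion> x) \<^bold>\<squnion> d"
    using assms(2) by (simp add: join_absorb1)
  also have "\<dots> = y \<^bold>\<squnion> (x \<^bold>\<squnion> d)"
    by (rule join_assoc)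
  also have "\<dots> = y"
    using assms by (simp add: lsim_def join_absorb1)
  finally show ?thesis
    by (simp add: lsim_def)
qed

lemma meet_join_le_left_bounded:
  assumes "x \<preceq> w" and "y \<preceq> w" and "d \<lesssim> x" and "d \<lesssim> y"
  shows "(x \<^bold>\<sqinter> y) \<^bold>\<squnion> d \<preceq> x"
proof -
  txt \<open>Writing e for the left-hand side, x' = x \<inter> (e \<squnion> x) lies between x \<inter> y and x and so
    absorbs x \<inter> y; distributing gives x' = x, i.e. x \<le> e \<squnion> x, and then e \<le> x \<squnion> e = x.\<close>
  let ?q = "x \<^bold>\<sqinter> y"
  let ?e = "?q \<^bold>\<squnion> d"
  let ?x' = "x \<^bold>\<sqinter> (?e \<^bold>\<squnion> x)"
  have join_e: "z \<^bold>\<squnion> ?e = z" if "?q \<preceq> z" and "d \<lesssim> z" for z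
  proof -
    have "z \<^bold>\<squnion> ?e = (z \<^bold>\<squnion> ?q) \<^bold>\<squnion> d"
      by (rule join_assoc [symmetric])
    also have "\<dots> = z"
      using that by (simp add: join_absorb1 lsim_def)
    finally show ?thesis .
  qed
  have "y \<^bold>\<squnion> (?e \<^bold>\<squnion> x) = (y \<^bold>\<squnion> ?e) \<^bold>\<squnion> x"
    by (rule join_assoc [symmetric])
  also have "y \<^bold>\<squnion> ?e = y"
    using assms(4) by (intro join_e) simp_all
  finally have "y \<^bold>\<squnion> ?x' = y \<^bold>\<squnion> x"
    by (simp add: join_meet_distrib_left)
  have "?q \<preceq> ?e \<^bold>\<squnion> x"
    using join_upper1 [of ?q d] join_upper1 [of ?e x] by (rule trans)
  then have "?q \<preceq> ?x'"
    by (simp add: boundedI)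
  have "?x' \<preceq> w"
    using assms(1) by (rule coboundedI1)
  have "?x' = ?x' \<^bold>\<squnion> ?q"
    using \<open>?q \<preceq> ?x'\<close> by (rule join_absorb1 [symmetric])
  also have "\<dots> = (?x' \<^bold>\<squnion> x) \<^bold>\<sqinter> (?x' \<^bold>\<squnion> y)"
    by (rule join_meet_distrib_left)
  also have "?x' \<^bold>\<squnion> x = x"
    by (rule join_absorb2) simp
  also have "?x' \<^bold>\<squnion> y = y \<^bold>\<squnion> ?x'"
    using \<open>?x' \<preceq> w\<close> assms(2) by (rule join_commute_bounded)
  also have "\<dots> = y \<^bold>\<squnion> x"
    by fact
  also have "x \<^bold>\<sqinter> (y \<^bold>\<squnion> x) = x"
    using join_upper2_bounded [OF assms(2,1)] by (rule absorb1)
  finally have "x \<preceq> ?e \<^bold>\<squnion> x"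
    by (simp only: absorb_iff1)
  then have "?e \<preceq> x \<^bold>\<squnion> ?e"
    using join_upper1 by (rule join_upper2_bounded)
  also have "x \<^bold>\<squnion> ?e = x"
    using assms(3) by (intro join_e) simp_all
  finally show ?thesis .
qed

lemma lsim_meet_bounded:
  assumes "x \<preceq> w" and "y \<preceq> w" and "d \<lesssim> x" and "d \<lesssim> y"
  shows "d \<lesssim> x \<^bold>\<sqinter> y"
proof -
  have "(x \<^bold>\<sqinter> y) \<^bold>\<squnion> d \<preceq> x \<^bold>\<sqinter> y"
    using meet_join_le_left_bounded [OF assms] meet_join_le_left_bounded [OF assms(2,1,4,3)]
    by (simp add: commute)
  then show ?thesis
    by (simp add: lsim_def antisym join_upper1)
qed

lemma lsim_meet_if_lsim_curlyvee:
  assumes "d \<lesssim> x" and "d \<lesssim> y" and "d \<lesssim> x \<curlyvee> y"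
  shows "d \<lesssim> x \<^bold>\<sqinter> y"
proof -
  have "d \<lesssim> x \<^bold>\<sqinter> (x \<curlyvee> y)"
    using lsim_meet_bounded [OF join_upper1 curlyvee_le_join assms(1,3)] .
  moreover have "d \<lesssim> y \<^bold>\<sqinter> (x \<curlyvee> y)"
    using lsim_meet_bounded [OF join_upper1 curlyvee_le_join assms(2), of x] assms(3)
    by (simp add: curlyvee_commute)
  ultimately have "d \<lesssim> (x \<^bold>\<sqinter> (x \<curlyvee> y)) \<^bold>\<sqinter> (y \<^bold>\<sqinter> (x \<curlyvee> y))"
    by (rule lsim_meet_bounded [OF cobounded2 cobounded2])
  then show ?thesis
    by (rule lsim_le_trans) (intro mono cobounded1)
qed

lemma lsim_curlyvee_trans:
  assumes "d \<lesssim> a" and "d \<lesssim> b" and "d \<lesssim> c"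
    and "d \<lesssim> a \<curlyvee> b" and "d \<lesssim> b \<curlyvee> c"
  shows "d \<lesssim> a \<curlyvee> c"
proof -
  have "d \<lesssim> (a \<^bold>\<sqinter> b) \<^bold>\<sqinter> (b \<^bold>\<sqinter> c)"
    using assms by (intro lsim_meet_bounded [OF cobounded2 cobounded1] lsim_meet_if_lsim_curlyvee)
  moreover have "(a \<^bold>\<sqinter> b) \<^bold>\<sqinter> (b \<^bold>\<sqinter> c) \<preceq> a \<curlyvee> c"
    using join_upper1 [of a c] join_upper1 [of c a]
    by (auto simp: curlyvee_def intro: coboundedI1 coboundedI2)
  ultimately show ?thesis
    by (rule lsim_le_trans)
qed

end

lemma ado_osemilattice_if_ado_semilattice:
  assumes "ado_semilattice m j"
  shows "ado_osemilattice m (sl_le m) (\<lambda>x y. sl_le m x y \<and> x \<noteq> y) j"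
proof -
  note facts = assms [unfolded ado_semilattice_def o_semilattice_def is_semilattice_def
      distributive_o_def]
  show ?thesis
  proof unfold_locales
    show "sl_le m a b \<longleftrightarrow> a = m a b" for a b
      by (simp add: sl_le_def)
    show "sl_le m a b \<and> a \<noteq> b \<longleftrightarrow> a = m a b \<and> a \<noteq> b" for a b
      by (simp add: sl_le_def)
  qed (insert facts, (elim conjE allE), assumption)+
qed

theorem proposition3p8:
  fixes meet join :: "'a \<Rightarrow> 'a \<Rightarrow> 'a"
  assumes "ado_semilattice meet join"
  defines "V \<equiv> curlyvee meet join"
  shows "(\<forall>a b. join a b = V a (V a b))
       \<and> (\<forall>a b. V a b = V b a) \<and> (\<forall>a. V a a = a)
       \<and> (\<forall>a b. join (V a b) (join a b) = join a b)
       \<and> (\<forall>a b c. join a (V b c) = V (join a b) (join a c))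
       \<and> (\<forall>a b c d. lsim join d a \<and> lsim join d b \<and> lsim join d c
                  \<and> lsim join d (V a b) \<and> lsim join d (V b c)
                  \<longrightarrow> lsim join d (V a c))"
proof -
  interpret ado_osemilattice meet "sl_le meet" "\<lambda>x y. sl_le meet x y \<and> x \<noteq> y" join
    using assms(1) by (rule ado_osemilattice_if_ado_semilattice)
  show ?thesis
  proof (intro conjI allI impI)
    show "join a b = V a (V a b)" for a b
      unfolding V_def by (rule curlyvee_curlyvee_left [symmetric])
    show "V a b = V b a" for a b
      unfolding V_def by (rule curlyvee_commute)
    show "V a a = a" for a
      unfolding V_def by (rule curlyvee_idem)
    show "join (V a b) (join a b) = join a b" for a b
      unfolding V_def by (rule join_absorb2 [OF curlyvee_le_join])
    show "join a (V b c) = V (join a b) (join a c)" for a b c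
      unfolding V_def by (rule join_curlyvee_distrib)
    show "lsim join d (V a c)"
      if "lsim join d a \<and> lsim join d b \<and> lsim join d c
          \<and> lsim join d (V a b) \<and> lsim join d (V b c)" for a b c d
      using that unfolding V_def by (blast intro: lsim_curlyvee_trans)
  qed
qed

end
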